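(* Let $\mathcal{P}_1,\dots,\mathcal{P}_k$ be finite posets. If $\mathbf{T}\in\mathcal{C}(\times_{j=1}^k\mathcal{P}_j)$ is a rank-one tensor, then $\mathbf{T}$ has ND rank one.
   Context: For a finite poset $\mathcal{Q}$, the order cone $\mathcal{C}(\mathcal{Q})$ is the set of $\mathbf{f}\in\mathbb{R}^{\mathcal{Q}}$ with $f_x\ge0$ for all $x$ and $f_x\le f_y$ whenever $x\preceq y$. The product poset $\times_j\mathcal{P}_j$ is ordered componentwise, so $\mathcal{C}(\times_j\mathcal{P}_j)$ consists of nonnegative tensors that are nondecreasing in the product order. A rank-one tensor is a nonzero tensor of the form $\otimes_{j=1}^k\mathbf{v}^{(j)}$ with real vectors $\mathbf{v}^{(j)}\in\mathbb{R}^{\mathcal{P}_j}$. The ND rank is the minimal $r$ with $\mathbf{T}=\sum_{i=1}^r\otimes_j\mathbf{v}^{(ij)}$, $\mathbf{v}^{(ij)}\in\mathcal{C}(\mathcal{P}_j)$. *)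

theory Defs
  imports Complex_Main "HOL-Library.FuncSet"
begin

text \<open>Posets P_1..P_k are given by carriers P j (j < k) with partial orders R j
  (Isabelle's partial_order_on).  Tensors on the product poset are real-valued
  functions on the product carrier PiE {..<k} P (only values on it matter).\<close>

definition prod_rel :: "nat \<Rightarrow> (nat \<Rightarrow> ('a \<times> 'a) set) \<Rightarrow> ((nat \<Rightarrow> 'a) \<times> (nat \<Rightarrow> 'a)) set" where
  "prod_rel k R = {(x, y). \<forall>j<k. (x j, y j) \<in> R j}"

definition order_cone :: "'b set \<Rightarrow> ('b \<times> 'b) set \<Rightarrow> ('b \<Rightarrow> real) \<Rightarrow> bool" where
  "order_cone A R f \<longleftrightarrow> (\<forall>x\<in>A. 0 \<le> f x) \<and> (\<forall>x\<in>A. \<forall>y\<in>A. (x, y) \<in> R \<longrightarrow> f x \<le> f y)"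

definition rank_one_tensor :: "nat \<Rightarrow> (nat \<Rightarrow> 'a set) \<Rightarrow> ((nat \<Rightarrow> 'a) \<Rightarrow> real) \<Rightarrow> bool" where
  "rank_one_tensor k P T \<longleftrightarrow>
     (\<exists>x\<in>PiE {..<k} P. T x \<noteq> 0) \<and>
     (\<exists>v :: nat \<Rightarrow> 'a \<Rightarrow> real. \<forall>x\<in>PiE {..<k} P. T x = (\<Prod>j<k. v j (x j)))"

definition nd_decomp :: "nat \<Rightarrow> (nat \<Rightarrow> 'a set) \<Rightarrow> (nat \<Rightarrow> ('a \<times> 'a) set) \<Rightarrow> ((nat \<Rightarrow> 'a) \<Rightarrow> real) \<Rightarrow> nat \<Rightarrow> bool" where
  "nd_decomp k P R T r \<longleftrightarrow>
     (\<exists>v :: nat \<Rightarrow> nat \<Rightarrow> 'a \<Rightarrow> real.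
        (\<forall>i<r. \<forall>j<k. order_cone (P j) (R j) (v i j)) \<and>
        (\<forall>x\<in>PiE {..<k} P. T x = (\<Sum>i<r. \<Prod>j<k. v i j (x j))))"

definition nd_rank :: "nat \<Rightarrow> (nat \<Rightarrow> 'a set) \<Rightarrow> (nat \<Rightarrow> ('a \<times> 'a) set) \<Rightarrow> ((nat \<Rightarrow> 'a) \<Rightarrow> real) \<Rightarrow> nat" where
  "nd_rank k P R T = (LEAST r. nd_decomp k P R T r)"

end

theory Submission
  imports Defs
begin

text \<open>A nonnegative rank-one tensor is the outer product of the absolute values \<open>w\<^sub>j\<close> of its
  factors. Pick a point \<open>x\<^sub>0\<close> with \<open>T x\<^sub>0 \<noteq> 0\<close>; then no factor vanishes at \<open>x\<^sub>0\<close>, and moving only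
  the \<open>j\<close>-th coordinate of \<open>x\<^sub>0\<close> shows that \<open>a \<mapsto> T (x\<^sub>0(j := a))\<close> is a positive multiple of \<open>w\<^sub>j\<close>.
  Monotonicity of \<open>T\<close> along such coordinate lines is therefore monotonicity of \<open>w\<^sub>j\<close>, so each \<open>w\<^sub>j\<close>
  lies in the order cone and \<open>T = \<Otimes>\<^sub>j w\<^sub>j\<close> is an ND decomposition of length one.\<close>

lemma rank_one_tensor_nonneg_factors:
  assumes "rank_one_tensor k P T"
    and "\<And>x. x \<in> PiE {..<k} P \<Longrightarrow> 0 \<le> T x"
  obtains w where "\<And>j a. 0 \<le> w j a"
    and "\<And>x. x \<in> PiE {..<k} P \<Longrightarrow> T x = (\<Prod>j<k. w j (x j))"
proof -
  obtain v where v: "\<And>x. x \<in> PiE {..<k} P \<Longrightarrow> T x = (\<Prod>j<k. v j (x j))"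
    using assms(1) unfolding rank_one_tensor_def by blast
  have "T x = (\<Prod>j<k. \<bar>v j (x j)\<bar>)" if "x \<in> PiE {..<k} P" for x
    using v[OF that] assms(2)[OF that] by (simp add: abs_prod[symmetric])
  then show thesis
    by (intro that[of "\<lambda>j a. \<bar>v j a\<bar>"]) simp_all
qed

lemma prod_fun_upd_remove:
  assumes "finite I" and "j \<in> I"
  shows "(\<Prod>i\<in>I. f i ((x(j := c)) i)) = f j c * (\<Prod>i\<in>I - {j}. f i (x i))"
  using assms by (simp add: prod.remove)

lemma prod_rel_fun_upd:
  assumes "\<And>i. i < k \<Longrightarrow> (x i, x i) \<in> R i"
    and "(a, b) \<in> R j"
  shows "(x(j := a), x(j := b)) \<in> prod_rel k R"
  using assms unfolding prod_rel_def by auto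

lemma order_cone_product_factor:
  assumes refl: "\<And>i. i < k \<Longrightarrow> refl_on (P i) (R i)"
    and cone: "order_cone (PiE {..<k} P) (prod_rel k R) T"
    and nonneg: "\<And>i a. 0 \<le> w i a"
    and T_eq: "\<And>x. x \<in> PiE {..<k} P \<Longrightarrow> T x = (\<Prod>i<k. w i (x i))"
    and x0: "x0 \<in> PiE {..<k} P" "T x0 \<noteq> 0"
    and j: "j < k"
  shows "order_cone (P j) (R j) (w j)"
  unfolding order_cone_def
proof (intro conjI ballI impI)
  show "0 \<le> w j a" for a
    by (rule nonneg)
next
  fix a b
  assume a: "a \<in> P j" and b: "b \<in> P j" and ab: "(a, b) \<in> R j"
  define C where "C = (\<Prod>i\<in>{..<k} - {j}. w i (x0 i))"
  have "w i (x0 i) \<noteq> 0" if "i < k" for i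
    using x0 T_eq[OF x0(1)] that by auto
  then have "C > 0"
    unfolding C_def using nonneg by (intro prod_pos) (auto simp: less_le)
  have line: "x0(j := c) \<in> PiE {..<k} P" if "c \<in> P j" for c
    using PiE_fun_upd[OF that x0(1)] j by (simp add: insert_absorb)
  have slice: "T (x0(j := c)) = w j c * C" if "c \<in> P j" for c
    unfolding T_eq[OF line[OF that]] C_def using j by (intro prod_fun_upd_remove) simp_all
  have "(x0 i, x0 i) \<in> R i" if "i < k" for i
    using refl[OF that] x0(1) that by (auto simp: refl_on_def)
  then have "(x0(j := a), x0(j := b)) \<in> prod_rel k R"
    using ab by (rule prod_rel_fun_upd)
  then have "T (x0(j := a)) \<le> T (x0(j := b))"
    using cone line[OF a] line[OF b] unfolding order_cone_def by blast
  then show "w j a \<le> w j b"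
    using \<open>C > 0\<close> by (simp add: slice a b)
qed

lemma nd_rank_eq_1I:
  assumes "nd_decomp k P R T 1" and "x \<in> PiE {..<k} P" and "T x \<noteq> 0"
  shows "nd_rank k P R T = 1"
proof -
  have "\<not> nd_decomp k P R T 0"
    using assms(2,3) unfolding nd_decomp_def by auto
  then show ?thesis
    unfolding nd_rank_def using assms(1)
    by (intro Least_equality) (auto simp: Suc_le_eq intro: gr0I)
qed

theorem theorem11:
  fixes k :: nat and P :: "nat \<Rightarrow> 'a set" and R :: "nat \<Rightarrow> ('a \<times> 'a) set"
    and T :: "(nat \<Rightarrow> 'a) \<Rightarrow> real"
  assumes "k \<ge> 1"
    and "\<And>j. j < k \<Longrightarrow> finite (P j)"
    and "\<And>j. j < k \<Longrightarrow> partial_order_on (P j) (R j)"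
    and "order_cone (PiE {..<k} P) (prod_rel k R) T"
    and "rank_one_tensor k P T"
  shows "nd_rank k P R T = 1"
proof -
  obtain x0 where x0: "x0 \<in> PiE {..<k} P" "T x0 \<noteq> 0"
    using assms(5) unfolding rank_one_tensor_def by blast
  have T_nonneg: "0 \<le> T x" if "x \<in> PiE {..<k} P" for x
    using assms(4) that unfolding order_cone_def by blast
  obtain w where w: "\<And>j a. 0 \<le> w j a"
    and T_eq: "\<And>x. x \<in> PiE {..<k} P \<Longrightarrow> T x = (\<Prod>j<k. w j (x j))"
    using rank_one_tensor_nonneg_factors[OF assms(5) T_nonneg] by blast
  have refl: "refl_on (P j) (R j)" if "j < k" for j
    using assms(3)[OF that] unfolding partial_order_on_def preorder_on_def by blast
  have "order_cone (P j) (R j) (w j)" if "j < k" for j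
    using order_cone_product_factor[OF refl assms(4) w T_eq x0 that] .
  then have "nd_decomp k P R T 1"
    unfolding nd_decomp_def using T_eq by (intro exI[of _ "\<lambda>_. w"]) auto
  then show ?thesis
    using x0 by (rule nd_rank_eq_1I)
qed

end
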